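(* Let $\pi:L_{\mathcal F}\to L_{\mathcal G}$ satisfy (REG). Suppose $L^*_{\mathcal F}\hookrightarrow L^1_{\mathcal F}$ is a Banach lattice with the property: for any sequence $(\eta_n)_n\subseteq(L^*_{\mathcal F})_+$ with $\eta_n\eta_m=0$ for all $n\neq m$, there exists a sequence $(\alpha_n)_n\subseteq(0,+\infty)$ such that $\sum_n\alpha_n\eta_n\in(L^*_{\mathcal F})_+$. Let $X\in L_{\mathcal F}$ with $H(X)>-\infty$ $\mathbb P$-a.s. Then for every $\varepsilon>0$ there exists $Q_\varepsilon\in L^*_{\mathcal F}\cap\mathcal P$ such that $H(X)-K(X,Q_\varepsilon)<\varepsilon$.
   Context: Let $(\Omega,\mathcal F,\mathbb P)$ be a probability space, $\mathcal G\subseteq\mathcal F$ a sub-$\sigma$-algebra. (In)equalities hold $\mathbb P$-a.s. unless a measure is indicated ($\ge_Q$: $Q$-a.s.); $\sup,\inf$ are $\mathbb P$-essential. $L_{\mathcal F}\subseteq L^0(\Omega,\mathcal F,\mathbb P)$, $L_{\mathcal G}\subseteq L^0(\Omega,\mathcal G,\mathbb P)$ are vector lattices closed under multiplication by indicators of $\mathcal F$- (resp. $\mathcal G$-) measurable sets; the order continuous dual $L^*_{\mathcal F}$ of $(L_{\mathcal F},\ge)$ is a lattice contained in $L^1_{\mathcal F}=L^1(\Omega,\mathcal F,\mathbb P)$ (functionals $X\mapsto E_{\mathbb P}[ZX]$), closed under multiplication by indicators of sets in $\mathcal F$. $\mathcal P=\{\xi'\in L^1_{\mathcal F}:\xi'\ge0,E_{\mathbb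 P}[\xi']=1\}$, identified with probabilities $Q\ll\mathbb P$. (REG): $\pi(X\mathbf 1_A+Y\mathbf 1_{A^c})=\pi(X)\mathbf 1_A+\pi(Y)\mathbf 1_{A^c}$ for $A\in\mathcal G$. $K(X,Q):=\inf_{\xi\in L_{\mathcal F}}\{\pi(\xi)\mid E_Q[\xi\mid\mathcal G]\ge_Q E_Q[X\mid\mathcal G]\}$ and $H(X):=\sup_{Q\in L^*_{\mathcal F}\cap\mathcal P}K(X,Q)$. *)

theory Defs
  imports "HOL-Probability.Probability"
begin

text \<open>Random variables are represented by functions; the paper's equivalence classes
  are modelled by sets of functions that are saturated under P-a.s. equality.\<close>

definition ae_saturated :: "'a measure \<Rightarrow> 'a measure \<Rightarrow> ('a \<Rightarrow> real) set \<Rightarrow> bool" where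
  "ae_saturated M N S \<longleftrightarrow> S \<subseteq> borel_measurable N \<and>
     (\<forall>X\<in>S. \<forall>Y\<in>borel_measurable N. (AE \<omega> in M. X \<omega> = Y \<omega>) \<longrightarrow> Y \<in> S)"

definition vector_lattice_fun :: "('a \<Rightarrow> real) set \<Rightarrow> bool" where
  "vector_lattice_fun S \<longleftrightarrow> (\<lambda>\<omega>. 0) \<in> S \<and>
     (\<forall>X\<in>S. \<forall>Y\<in>S. (\<lambda>\<omega>. X \<omega> + Y \<omega>) \<in> S) \<and>
     (\<forall>X\<in>S. \<forall>c::real. (\<lambda>\<omega>. c * X \<omega>) \<in> S) \<and>
     (\<forall>X\<in>S. \<forall>Y\<in>S. (\<lambda>\<omega>. max (X \<omega>) (Y \<omega>)) \<in> S)"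

definition indicator_closed :: "'a measure \<Rightarrow> ('a \<Rightarrow> real) set \<Rightarrow> bool" where
  "indicator_closed N S \<longleftrightarrow> (\<forall>X\<in>S. \<forall>A\<in>sets N. (\<lambda>\<omega>. indicator A \<omega> * X \<omega>) \<in> S)"

definition banach_lattice_in_L1 :: "'a measure \<Rightarrow> ('a \<Rightarrow> real) set \<Rightarrow> (('a \<Rightarrow> real) \<Rightarrow> real) \<Rightarrow> bool" where
  "banach_lattice_in_L1 M S N \<longleftrightarrow>
     (\<forall>x\<in>S. N x \<ge> 0 \<and> (N x = 0 \<longleftrightarrow> (AE \<omega> in M. x \<omega> = 0))) \<and>
     (\<forall>x\<in>S. \<forall>y\<in>S. N (\<lambda>\<omega>. x \<omega> + y \<omega>) \<le> N x + N y) \<and>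
     (\<forall>x\<in>S. \<forall>c::real. N (\<lambda>\<omega>. c * x \<omega>) = \<bar>c\<bar> * N x) \<and>
     (\<forall>x\<in>S. \<forall>y\<in>S. (AE \<omega> in M. \<bar>x \<omega>\<bar> \<le> \<bar>y \<omega>\<bar>) \<longrightarrow> N x \<le> N y) \<and>
     (\<forall>s::nat \<Rightarrow> 'a \<Rightarrow> real. (\<forall>n. s n \<in> S) \<and>
        (\<forall>e>0. \<exists>m. \<forall>n\<ge>m. \<forall>k\<ge>m. N (\<lambda>\<omega>. s n \<omega> - s k \<omega>) < e)
        \<longrightarrow> (\<exists>x\<in>S. (\<lambda>n. N (\<lambda>\<omega>. s n \<omega> - x \<omega>)) \<longlonglongrightarrow> 0)) \<and>
     (\<exists>C. \<forall>x\<in>S. (\<integral>\<omega>. \<bar>x \<omega>\<bar> \<partial>M) \<le> C * N x)"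

text \<open>Densities of probability measures Q << P.\<close>
definition prob_densities :: "'a measure \<Rightarrow> ('a \<Rightarrow> real) set" where
  "prob_densities M = {q. integrable M q \<and> (AE \<omega> in M. q \<omega> \<ge> 0) \<and> (\<integral>\<omega>. q \<omega> \<partial>M) = 1}"

definition dens_measure :: "'a measure \<Rightarrow> ('a \<Rightarrow> real) \<Rightarrow> 'a measure" where
  "dens_measure M q = density M (\<lambda>\<omega>. ennreal (q \<omega>))"

definition is_ess_inf_fam :: "'a measure \<Rightarrow> ('a \<Rightarrow> ereal) set \<Rightarrow> ('a \<Rightarrow> ereal) \<Rightarrow> bool" where
  "is_ess_inf_fam M S g \<longleftrightarrow> g \<in> borel_measurable M \<and>
     (\<forall>f\<in>S. AE \<omega> in M. g \<omega> \<le> f \<omega>) \<and>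
     (\<forall>h\<in>borel_measurable M. (\<forall>f\<in>S. AE \<omega> in M. h \<omega> \<le> f \<omega>) \<longrightarrow> (AE \<omega> in M. h \<omega> \<le> g \<omega>))"

definition is_ess_sup_fam :: "'a measure \<Rightarrow> ('a \<Rightarrow> ereal) set \<Rightarrow> ('a \<Rightarrow> ereal) \<Rightarrow> bool" where
  "is_ess_sup_fam M S g \<longleftrightarrow> g \<in> borel_measurable M \<and>
     (\<forall>f\<in>S. AE \<omega> in M. f \<omega> \<le> g \<omega>) \<and>
     (\<forall>h\<in>borel_measurable M. (\<forall>f\<in>S. AE \<omega> in M. f \<omega> \<le> h \<omega>) \<longrightarrow> (AE \<omega> in M. g \<omega> \<le> h \<omega>))"

definition ess_inf_fam :: "'a measure \<Rightarrow> ('a \<Rightarrow> ereal) set \<Rightarrow> ('a \<Rightarrow> ereal)" where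
  "ess_inf_fam M S = (SOME g. is_ess_inf_fam M S g)"

definition ess_sup_fam :: "'a measure \<Rightarrow> ('a \<Rightarrow> ereal) set \<Rightarrow> ('a \<Rightarrow> ereal)" where
  "ess_sup_fam M S = (SOME g. is_ess_sup_fam M S g)"

definition Kfun :: "'a measure \<Rightarrow> 'a measure \<Rightarrow> ('a \<Rightarrow> real) set \<Rightarrow> (('a \<Rightarrow> real) \<Rightarrow> ('a \<Rightarrow> real))
    \<Rightarrow> ('a \<Rightarrow> real) \<Rightarrow> ('a \<Rightarrow> real) \<Rightarrow> ('a \<Rightarrow> ereal)" where
  "Kfun M G LF \<pi>F X q = ess_inf_fam M
     {(\<lambda>\<omega>. ereal (\<pi>F \<xi> \<omega>)) | \<xi>. \<xi> \<in> LF \<and>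
        (AE \<omega> in dens_measure M q.
           real_cond_exp (dens_measure M q) G \<xi> \<omega> \<ge> real_cond_exp (dens_measure M q) G X \<omega>)}"

definition Hfun :: "'a measure \<Rightarrow> 'a measure \<Rightarrow> ('a \<Rightarrow> real) set \<Rightarrow> ('a \<Rightarrow> real) set
    \<Rightarrow> (('a \<Rightarrow> real) \<Rightarrow> ('a \<Rightarrow> real)) \<Rightarrow> ('a \<Rightarrow> real) \<Rightarrow> ('a \<Rightarrow> ereal)" where
  "Hfun M G LF Lstar \<pi>F X = ess_sup_fam M
     {Kfun M G LF \<pi>F X q | q. q \<in> Lstar \<inter> prob_densities M}"

end

theory Submission
  imports Defs
begin

text \<open>\<open>H(X)\<close> is the essential supremum of the \<open>K(X,Q)\<close>, so it is the pointwise supremum of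
  countably many \<open>K(X,Q\<^sub>n)\<close>, each of which has a \<open>\<G>\<close>-measurable version. The \<open>\<G>\<close>-sets
  \<open>A\<^sub>n = {H(X) - \<epsilon> < K(X,Q\<^sub>n)}\<close> cover \<open>\<Omega>\<close>; let \<open>B\<^sub>n\<close> be their disjointification. By (REG),
  \<open>K(X,Q) \<ge> K(X,Q\<^sub>n)\<close> on \<open>B\<^sub>n\<close> as soon as \<open>dQ/dP\<close> is a nonnegative multiple of \<open>dQ\<^sub>n/dP\<close>
  there: a claim dominating \<open>X\<close> under \<open>Q\<^sub>n\<close> can be replaced by \<open>X\<close> outside \<open>B\<^sub>n\<close>. The lattice
  hypothesis on \<open>L\<^sup>*\<close> yields \<open>\<alpha>\<^sub>n > 0\<close> with \<open>\<Sum> \<alpha>\<^sub>n 1\<^bsub>B\<^sub>n\<^esub> dQ\<^sub>n/dP \<in> L\<^sup>*\<close>; normalised, this is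
  the density of a single \<open>Q\<^sub>\<epsilon>\<close> with \<open>H(X) - K(X,Q\<^sub>\<epsilon>) < \<epsilon>\<close> everywhere.\<close>

text \<open>A bounded, strictly monotone encoding of the extended reals, used to compare essential
  infima of arbitrary families through integrals.\<close>
definition arctan_ereal :: "ereal \<Rightarrow> real" where
  "arctan_ereal x =
     (if x = \<infinity> then pi/2 else if x = -\<infinity> then -(pi/2) else arctan (real_of_ereal x))"

lemma arctan_ereal_strict_mono: "x < y \<Longrightarrow> arctan_ereal x < arctan_ereal y"
  using arctan_bounded by (cases x; cases y) (auto simp: arctan_ereal_def arctan_less_iff)

lemma arctan_ereal_mono: "x \<le> y \<Longrightarrow> arctan_ereal x \<le> arctan_ereal y"
  using arctan_ereal_strict_mono by (cases "x = y") (auto simp: order_le_less)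

lemma abs_arctan_ereal_le: "\<bar>arctan_ereal x\<bar> \<le> pi/2"
  using arctan_bounded[of "real_of_ereal x"] by (auto simp: arctan_ereal_def)

lemma arctan_ereal_ge: "- (pi/2) \<le> arctan_ereal x"
  using abs_arctan_ereal_le[of x] by linarith

lemma measurable_arctan_ereal[measurable]:
  assumes [measurable]: "g \<in> borel_measurable M"
  shows "(\<lambda>\<omega>. arctan_ereal (g \<omega>)) \<in> borel_measurable M"
  unfolding arctan_ereal_def by measurable

definition INF_arctan_integral :: "'a measure \<Rightarrow> (nat \<Rightarrow> 'a \<Rightarrow> ereal) \<Rightarrow> real" where
  "INF_arctan_integral M f = (\<integral>\<omega>. arctan_ereal (INF n. f n \<omega>) \<partial>M)"

lemma (in finite_measure) integrable_arctan_INF: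
  fixes f :: "nat \<Rightarrow> 'a \<Rightarrow> ereal"
  assumes "\<And>n. f n \<in> borel_measurable M"
  shows "integrable M (\<lambda>\<omega>. arctan_ereal (INF n. f n \<omega>))"
proof (rule integrable_const_bound[where B="pi/2"])
  have "(\<lambda>\<omega>. INF n. f n \<omega>) \<in> borel_measurable M"
    using assms by (intro borel_measurable_INF) auto
  then show "(\<lambda>\<omega>. arctan_ereal (INF n. f n \<omega>)) \<in> borel_measurable M"
    by (rule measurable_arctan_ereal)
qed (intro AE_I2, unfold real_norm_def, rule abs_arctan_ereal_le)

lemma (in finite_measure) INF_arctan_integral_mono:
  fixes f g :: "nat \<Rightarrow> 'a \<Rightarrow> ereal"
  assumes "\<And>n. f n \<in> borel_measurable M" "\<And>n. g n \<in> borel_measurable M"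
    and "\<And>\<omega>. (INF n. f n \<omega>) \<le> (INF n. g n \<omega>)"
  shows "INF_arctan_integral M f \<le> INF_arctan_integral M g"
  unfolding INF_arctan_integral_def using assms
  by (intro integral_mono integrable_arctan_INF arctan_ereal_mono)

lemma (in finite_measure) INF_arctan_integral_ge:
  fixes f :: "nat \<Rightarrow> 'a \<Rightarrow> ereal"
  assumes "\<And>n. f n \<in> borel_measurable M"
  shows "- (pi/2) * measure M (space M) \<le> INF_arctan_integral M f"
proof -
  have "(\<integral>\<omega>. - (pi/2) \<partial>M) \<le> INF_arctan_integral M f"
    unfolding INF_arctan_integral_def using assms
    by (intro integral_mono integrable_arctan_INF) (auto intro: arctan_ereal_ge)
  then show ?thesis by (simp add: mult.commute)
qed

lemma INF_prod_decode_le: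
  fixes ff :: "nat \<Rightarrow> nat \<Rightarrow> 'b::complete_lattice"
  shows "(INF n. ff (fst (prod_decode n)) (snd (prod_decode n))) \<le> (INF j. ff k j)"
proof (rule INF_greatest)
  fix j
  show "(INF n. ff (fst (prod_decode n)) (snd (prod_decode n))) \<le> ff k j"
    using INF_lower[of "prod_encode (k, j)" UNIV "\<lambda>n. ff (fst (prod_decode n)) (snd (prod_decode n))"]
    by simp
qed

text \<open>Diagonalising a minimising sequence of countable subfamilies yields a single countable
  subfamily minimising the functional.\<close>
lemma (in finite_measure) ex_INF_arctan_integral_minimal:
  fixes S :: "('a \<Rightarrow> ereal) set"
  assumes S: "S \<subseteq> borel_measurable M" "S \<noteq> {}"
  shows "\<exists>F. range F \<subseteq> S \<and>
    (\<forall>f. range f \<subseteq> S \<longrightarrow> INF_arctan_integral M F \<le> INF_arctan_integral M f)"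
proof -
  let ?v = "INF_arctan_integral M" and ?seqs = "{f. range f \<subseteq> S}"
  have meas: "\<And>n. f n \<in> borel_measurable M" if "f \<in> ?seqs" for f
    using that S by auto
  have "- (pi/2) * measure M (space M) \<le> ?v f" if "f \<in> ?seqs" for f
    using meas[OF that] by (rule INF_arctan_integral_ge)
  then have bdd: "bdd_below (?v ` ?seqs)" by (rule bdd_belowI2)
  obtain s where "s \<in> S" using S by blast
  then have ne: "?v ` ?seqs \<noteq> {}" by (auto intro!: exI[of _ "\<lambda>_. s"])
  define m where "m = Inf (?v ` ?seqs)"
  have "\<forall>k. \<exists>f. f \<in> ?seqs \<and> ?v f < m + inverse (Suc k)"
    using cInf_lessD[OF ne] by (auto simp: m_def)
  then obtain ff where ff: "\<And>k. ff k \<in> ?seqs" "\<And>k. ?v (ff k) < m + inverse (Suc k)"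
    using choice[of "\<lambda>k f. f \<in> ?seqs \<and> ?v f < m + inverse (Suc k)"] by blast
  define F where "F n = ff (fst (prod_decode n)) (snd (prod_decode n))" for n
  have F: "F \<in> ?seqs" using ff(1) by (auto simp: F_def)
  have "(INF n. F n \<omega>) \<le> (INF j. ff k j \<omega>)" for k \<omega>
    using INF_prod_decode_le[of "\<lambda>i j. ff i j \<omega>" k] by (simp add: F_def)
  then have v_F_le: "?v F \<le> ?v (ff k)" for k
    using meas[OF F] meas[OF ff(1)] by (intro INF_arctan_integral_mono)
  have v_F: "?v F < m + inverse (Suc k)" for k
    using v_F_le[of k] ff(2)[of k] by linarith
  have "?v F \<le> m"
  proof (rule field_le_epsilon)
    fix e :: real assume "0 < e"
    then obtain k where "inverse (Suc k) < e" using reals_Archimedean by blast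
    then show "?v F \<le> m + e" using v_F[of k] by linarith
  qed
  show ?thesis
  proof (intro exI[of _ F] conjI allI impI)
    show "range F \<subseteq> S" using F by simp
    fix f :: "nat \<Rightarrow> 'a \<Rightarrow> ereal" assume "range f \<subseteq> S"
    then have "m \<le> ?v f" unfolding m_def using bdd by (auto intro: cInf_lower)
    with \<open>?v F \<le> m\<close> show "?v F \<le> ?v f" by linarith
  qed
qed

text \<open>Adjoining \<open>s\<close> to the minimising subfamily leaves the integral unchanged, and since
  \<open>arctan_ereal\<close> is strictly monotone the infimum itself does not move a.e.\<close>
lemma (in finite_measure) AE_INF_le_of_minimal:
  fixes S :: "('a \<Rightarrow> ereal) set" and F :: "nat \<Rightarrow> 'a \<Rightarrow> ereal"
  assumes S: "S \<subseteq> borel_measurable M" "range F \<subseteq> S"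
    and min: "\<And>f. range f \<subseteq> S \<Longrightarrow> INF_arctan_integral M F \<le> INF_arctan_integral M f"
    and s: "s \<in> S"
  shows "AE \<omega> in M. (INF n. F n \<omega>) \<le> s \<omega>"
proof -
  define F' where "F' = case_nat s F"
  have F': "range F' \<subseteq> S" using s S(2) by (auto simp: F'_def image_subset_iff split: nat.split)
  have measF: "\<And>n. F n \<in> borel_measurable M" "\<And>n. F' n \<in> borel_measurable M"
    using S F' by blast+
  have le_F: "(INF n. F' n \<omega>) \<le> (INF n. F n \<omega>)" for \<omega>
  proof (rule INF_greatest)
    fix n show "(INF n. F' n \<omega>) \<le> F n \<omega>"
      using INF_lower[of "Suc n" UNIV "\<lambda>n. F' n \<omega>"] by (simp add: F'_def)
  qed
  have le_s: "(INF n. F' n \<omega>) \<le> s \<omega>" for \<omega>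
    using INF_lower[of 0 UNIV "\<lambda>n. F' n \<omega>"] by (simp add: F'_def)
  have int: "integrable M (\<lambda>\<omega>. arctan_ereal (INF n. F n \<omega>))"
    "integrable M (\<lambda>\<omega>. arctan_ereal (INF n. F' n \<omega>))"
    using measF by (auto intro: integrable_arctan_INF)
  let ?d = "\<lambda>\<omega>. arctan_ereal (INF n. F n \<omega>) - arctan_ereal (INF n. F' n \<omega>)"
  have "INF_arctan_integral M F' \<le> INF_arctan_integral M F"
    using measF le_F by (intro INF_arctan_integral_mono)
  with min[OF F'] have "(\<integral>\<omega>. ?d \<omega> \<partial>M) = 0"
    unfolding INF_arctan_integral_def using int by simp
  moreover have "AE \<omega> in M. 0 \<le> ?d \<omega>"
    using arctan_ereal_mono[OF le_F] by simp
  moreover have "integrable M ?d" using int by simp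
  ultimately have "AE \<omega> in M. ?d \<omega> = 0"
    by (simp add: integral_nonneg_eq_0_iff_AE)
  then show ?thesis
  proof (rule AE_mp, intro AE_I2 impI)
    fix \<omega> assume "?d \<omega> = 0"
    then have "\<not> (INF n. F' n \<omega>) < (INF n. F n \<omega>)"
      using arctan_ereal_strict_mono[of "INF n. F' n \<omega>" "INF n. F n \<omega>"] by linarith
    then have "(INF n. F' n \<omega>) = (INF n. F n \<omega>)" using le_F[of \<omega>] by simp
    with le_s[of \<omega>] show "(INF n. F n \<omega>) \<le> s \<omega>" by simp
  qed
qed

lemma (in finite_measure) ess_inf_countable_lower_bound:
  fixes S :: "('a \<Rightarrow> ereal) set"
  assumes S: "S \<subseteq> borel_measurable M" "S \<noteq> {}"
  shows "\<exists>F :: nat \<Rightarrow> 'a \<Rightarrow> ereal.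
    range F \<subseteq> S \<and> (\<forall>s\<in>S. AE \<omega> in M. (INF n. F n \<omega>) \<le> s \<omega>)"
proof -
  obtain F where F: "range F \<subseteq> S"
    and min: "\<And>f. range f \<subseteq> S \<Longrightarrow> INF_arctan_integral M F \<le> INF_arctan_integral M f"
    using ex_INF_arctan_integral_minimal[OF S] by blast
  have "AE \<omega> in M. (INF n. F n \<omega>) \<le> s \<omega>" if "s \<in> S" for s
    using S(1) F min that by (rule AE_INF_le_of_minimal)
  with F show ?thesis by blast
qed

lemma (in finite_measure) ess_sup_countable_upper_bound:
  fixes S :: "('a \<Rightarrow> ereal) set"
  assumes S: "S \<subseteq> borel_measurable M" "S \<noteq> {}"
  shows "\<exists>F :: nat \<Rightarrow> 'a \<Rightarrow> ereal.
    range F \<subseteq> S \<and> (\<forall>s\<in>S. AE \<omega> in M. s \<omega> \<le> (SUP n. F n \<omega>))"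
proof -
  define neg :: "('a \<Rightarrow> ereal) \<Rightarrow> 'a \<Rightarrow> ereal" where "neg s \<omega> = - s \<omega>" for s \<omega>
  have neg_neg: "neg (neg s) = s" for s by (simp add: neg_def fun_eq_iff)
  have "neg ` S \<subseteq> borel_measurable M"
  proof
    fix t assume "t \<in> neg ` S"
    then obtain s where "s \<in> S" "t = neg s" by blast
    with S(1) have [measurable]: "s \<in> borel_measurable M" "t = neg s" by auto
    show "t \<in> borel_measurable M" unfolding \<open>t = neg s\<close> neg_def by measurable
  qed
  moreover have "neg ` S \<noteq> {}" using S(2) by simp
  ultimately obtain F :: "nat \<Rightarrow> 'a \<Rightarrow> ereal" where F: "range F \<subseteq> neg ` S"
    and low: "\<forall>s\<in>neg ` S. AE \<omega> in M. (INF n. F n \<omega>) \<le> s \<omega>"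
    using ess_inf_countable_lower_bound by meson
  have neg_in: "neg (F n) \<in> S" for n
  proof -
    obtain s where "s \<in> S" "F n = neg s" using F by blast
    then show ?thesis by (simp add: neg_neg)
  qed
  have upper: "AE \<omega> in M. s \<omega> \<le> (SUP n. neg (F n) \<omega>)" if "s \<in> S" for s
  proof -
    have "AE \<omega> in M. (INF n. F n \<omega>) \<le> neg s \<omega>" using low that by blast
    then show ?thesis
    proof (rule AE_mp, intro AE_I2 impI)
      fix \<omega> assume "(INF n. F n \<omega>) \<le> neg s \<omega>"
      then have "- neg s \<omega> \<le> - (INF n. F n \<omega>)" by simp
      then show "s \<omega> \<le> (SUP n. neg (F n) \<omega>)" by (simp add: neg_def ereal_SUP_uminus_eq)
    qed
  qed
  show ?thesis
  proof (intro exI[of _ "\<lambda>n. neg (F n)"] conjI ballI)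
    show "range (\<lambda>n. neg (F n)) \<subseteq> S" using neg_in by blast
  qed (rule upper)
qed

lemma is_ess_inf_fam_INF:
  fixes F :: "nat \<Rightarrow> 'a \<Rightarrow> ereal"
  assumes S: "S \<subseteq> borel_measurable M" "range F \<subseteq> S"
    and lower: "\<forall>s\<in>S. AE \<omega> in M. (INF n. F n \<omega>) \<le> s \<omega>"
  shows "is_ess_inf_fam M S (\<lambda>\<omega>. INF n. F n \<omega>)"
  unfolding is_ess_inf_fam_def
proof (intro conjI ballI impI)
  show "(\<lambda>\<omega>. INF n. F n \<omega>) \<in> borel_measurable M" using S by (intro borel_measurable_INF) auto
  show "AE \<omega> in M. (INF n. F n \<omega>) \<le> s \<omega>" if "s \<in> S" for s using lower that by blast
  fix h assume "\<forall>s\<in>S. AE \<omega> in M. h \<omega> \<le> s \<omega>"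
  then have "AE \<omega> in M. \<forall>n. h \<omega> \<le> F n \<omega>" using S(2) by (auto simp: AE_all_countable)
  then show "AE \<omega> in M. h \<omega> \<le> (INF n. F n \<omega>)" by (rule AE_mp) (auto intro: INF_greatest)
qed

lemma is_ess_sup_fam_SUP:
  fixes F :: "nat \<Rightarrow> 'a \<Rightarrow> ereal"
  assumes S: "S \<subseteq> borel_measurable M" "range F \<subseteq> S"
    and upper: "\<forall>s\<in>S. AE \<omega> in M. s \<omega> \<le> (SUP n. F n \<omega>)"
  shows "is_ess_sup_fam M S (\<lambda>\<omega>. SUP n. F n \<omega>)"
  unfolding is_ess_sup_fam_def
proof (intro conjI ballI impI)
  show "(\<lambda>\<omega>. SUP n. F n \<omega>) \<in> borel_measurable M" using S by (intro borel_measurable_SUP) auto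
  show "AE \<omega> in M. s \<omega> \<le> (SUP n. F n \<omega>)" if "s \<in> S" for s using upper that by blast
  fix h assume "\<forall>s\<in>S. AE \<omega> in M. s \<omega> \<le> h \<omega>"
  then have "AE \<omega> in M. \<forall>n. F n \<omega> \<le> h \<omega>" using S(2) by (auto simp: AE_all_countable)
  then show "AE \<omega> in M. (SUP n. F n \<omega>) \<le> h \<omega>" by (rule AE_mp) (auto intro: SUP_least)
qed

lemma is_ess_inf_fam_ess_inf_fam:
  "is_ess_inf_fam M S g \<Longrightarrow> is_ess_inf_fam M S (ess_inf_fam M S)"
  unfolding ess_inf_fam_def by (rule someI[where P = "is_ess_inf_fam M S"])

lemma AE_ess_inf_fam_eq:
  assumes "is_ess_inf_fam M S g"
  shows "AE \<omega> in M. ess_inf_fam M S \<omega> = g \<omega>"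
proof -
  have "is_ess_inf_fam M S (ess_inf_fam M S)" using assms by (rule is_ess_inf_fam_ess_inf_fam)
  with assms have "AE \<omega> in M. ess_inf_fam M S \<omega> \<le> g \<omega>" "AE \<omega> in M. g \<omega> \<le> ess_inf_fam M S \<omega>"
    unfolding is_ess_inf_fam_def by auto
  then show ?thesis by eventually_elim auto
qed

lemma AE_ess_sup_fam_eq:
  assumes "is_ess_sup_fam M S g"
  shows "AE \<omega> in M. ess_sup_fam M S \<omega> = g \<omega>"
proof -
  have "is_ess_sup_fam M S (ess_sup_fam M S)"
    unfolding ess_sup_fam_def using assms by (rule someI[where P = "is_ess_sup_fam M S"])
  with assms have "AE \<omega> in M. ess_sup_fam M S \<omega> \<le> g \<omega>" "AE \<omega> in M. g \<omega> \<le> ess_sup_fam M S \<omega>"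
    unfolding is_ess_sup_fam_def by auto
  then show ?thesis by eventually_elim auto
qed

lemma finite_measure_dens_measure:
  assumes "integrable M q"
  shows "finite_measure (dens_measure M q)"
proof (rule finite_measureI)
  have [measurable]: "q \<in> borel_measurable M" using assms by auto
  have "emeasure (dens_measure M q) (space (dens_measure M q))
      = (\<integral>\<^sup>+ \<omega>. ennreal (q \<omega>) * indicator (space M) \<omega> \<partial>M)"
    unfolding dens_measure_def by (simp add: emeasure_density)
  also have "\<dots> \<le> (\<integral>\<^sup>+ \<omega>. ennreal (norm (q \<omega>)) \<partial>M)"
    by (rule nn_integral_mono) (auto split: split_indicator)
  also have "\<dots> < \<infinity>" using assms by (simp add: integrable_iff_bounded)
  finally show "emeasure (dens_measure M q) (space (dens_measure M q)) \<noteq> \<infinity>" by simp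
qed

lemma AE_nonneg_iff_set_integral_nonneg:
  fixes Z :: "'a \<Rightarrow> real"
  assumes sub: "subalgebra M F" and Z: "Z \<in> borel_measurable F" "integrable M Z"
  shows "(AE \<omega> in M. 0 \<le> Z \<omega>) \<longleftrightarrow> (\<forall>A\<in>sets F. 0 \<le> (\<integral>\<omega>\<in>A. Z \<omega> \<partial>M))"
proof
  assume "AE \<omega> in M. 0 \<le> Z \<omega>"
  then have "AE \<omega> in M. 0 \<le> indicator A \<omega> *\<^sub>R Z \<omega>" for A
    by eventually_elim (simp split: split_indicator)
  then show "\<forall>A\<in>sets F. 0 \<le> (\<integral>\<omega>\<in>A. Z \<omega> \<partial>M)"
    unfolding set_lebesgue_integral_def by (blast intro: integral_nonneg_AE)
next
  assume nonneg: "\<forall>A\<in>sets F. 0 \<le> (\<integral>\<omega>\<in>A. Z \<omega> \<partial>M)"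
  have [measurable]: "Z \<in> borel_measurable F" by (rule Z(1))
  define A where "A = {\<omega> \<in> space M. Z \<omega> < 0}"
  have "{\<omega> \<in> space F. Z \<omega> < 0} \<in> sets F" by measurable
  moreover have "space F = space M" using sub by (simp add: subalgebra_def)
  ultimately have AF: "A \<in> sets F" by (simp add: A_def)
  then have "A \<in> sets M" using sub by (auto simp: subalgebra_def)
  let ?g = "\<lambda>\<omega>. - (indicator A \<omega> * Z \<omega>)"
  have int: "integrable M ?g" using integrable_mult_indicator[OF \<open>A \<in> sets M\<close> Z(2)] by simp
  have pos: "AE \<omega> in M. 0 \<le> ?g \<omega>" by (auto simp: A_def split: split_indicator)
  have "integral\<^sup>L M ?g \<le> 0" using nonneg AF by (simp add: set_lebesgue_integral_def)
  then have "integral\<^sup>L M ?g = 0" using integral_nonneg_AE[OF pos] by linarith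
  then have "AE \<omega> in M. ?g \<omega> = 0" using integral_nonneg_eq_0_iff_AE[OF int pos] by simp
  then show "AE \<omega> in M. 0 \<le> Z \<omega>" by (rule AE_mp) (auto simp: A_def split: split_indicator)
qed

lemma real_cond_exp_dens_measure_ge_iff:
  assumes sub: "subalgebra M G" and q: "integrable M q" "AE \<omega> in M. 0 \<le> q \<omega>"
    and meas[measurable]: "\<xi> \<in> borel_measurable M" "X \<in> borel_measurable M"
    and int: "integrable M (\<lambda>\<omega>. q \<omega> * \<xi> \<omega>)" "integrable M (\<lambda>\<omega>. q \<omega> * X \<omega>)"
  shows "(AE \<omega> in dens_measure M q.
            real_cond_exp (dens_measure M q) G \<xi> \<omega> \<ge> real_cond_exp (dens_measure M q) G X \<omega>)
     \<longleftrightarrow> (\<forall>B\<in>sets G. 0 \<le> (\<integral>\<omega>. q \<omega> * (indicator B \<omega> * (\<xi> \<omega> - X \<omega>)) \<partial>M))"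
proof -
  define Q where "Q = dens_measure M q"
  have [measurable]: "q \<in> borel_measurable M" using q by auto
  have Q: "Q = density M q" "sets Q = sets M" by (simp_all add: Q_def dens_measure_def)
  interpret finite_measure Q unfolding Q_def using q(1) by (rule finite_measure_dens_measure)
  interpret finite_measure_subalgebra Q G
    using sub Q(2) by unfold_locales (simp add: subalgebra_def Q_def dens_measure_def)
  have intQ: "integrable Q \<xi>" "integrable Q X"
    using int q(2) by (simp_all add: Q(1) integrable_density)
  let ?Y = "\<lambda>\<omega>. \<xi> \<omega> - X \<omega>"
  have "(AE \<omega> in Q. real_cond_exp Q G X \<omega> \<le> real_cond_exp Q G \<xi> \<omega>)
      \<longleftrightarrow> (AE \<omega> in Q. 0 \<le> real_cond_exp Q G ?Y \<omega>)"
    using real_cond_exp_diff[OF intQ] by (auto elim: AE_mp)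
  also have "\<dots> \<longleftrightarrow> (\<forall>B\<in>sets G. 0 \<le> (\<integral>\<omega>\<in>B. real_cond_exp Q G ?Y \<omega> \<partial>Q))"
    using intQ by (intro AE_nonneg_iff_set_integral_nonneg subalg) auto
  also have "\<dots> \<longleftrightarrow> (\<forall>B\<in>sets G. 0 \<le> (\<integral>\<omega>\<in>B. ?Y \<omega> \<partial>Q))"
    using intQ by (simp add: real_cond_exp_intA)
  also have "\<dots> \<longleftrightarrow> (\<forall>B\<in>sets G. 0 \<le> (\<integral>\<omega>. q \<omega> * (indicator B \<omega> * ?Y \<omega>) \<partial>M))"
  proof -
    have "(\<integral>\<omega>\<in>B. ?Y \<omega> \<partial>Q) = (\<integral>\<omega>. q \<omega> * (indicator B \<omega> * ?Y \<omega>) \<partial>M)" if "B \<in> sets G" for B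
    proof -
      have [measurable]: "B \<in> sets M" using that sub by (auto simp: subalgebra_def)
      show ?thesis unfolding set_lebesgue_integral_def Q(1) using q(2) by (subst integral_density) auto
    qed
    then show ?thesis by simp
  qed
  finally show ?thesis unfolding Q_def .
qed

lemma suminf_indicator_disjoint_family:
  fixes f :: "nat \<Rightarrow> real"
  assumes "disjoint_family B" "\<omega> \<in> B n"
  shows "(\<Sum>k. c k * (indicator (B k) \<omega> * f k)) = c n * f n"
proof -
  have "(\<lambda>k. c k * (indicator (B k) \<omega> * f k)) = (\<lambda>k. if k = n then c k * f k else 0)"
    using assms by (auto simp: disjoint_family_on_def indicator_def fun_eq_iff)
  then show ?thesis using sums_single[of n "\<lambda>k. c k * f k"] sums_unique by metis
qed

definition weighted_disjoint_sums_closed :: "'a measure \<Rightarrow> ('a \<Rightarrow> real) set \<Rightarrow> bool" where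
  "weighted_disjoint_sums_closed M Lstar \<longleftrightarrow> (\<forall>\<eta>::nat \<Rightarrow> 'a \<Rightarrow> real.
     (\<forall>n. \<eta> n \<in> Lstar \<and> (AE \<omega> in M. \<eta> n \<omega> \<ge> 0)) \<and>
     (\<forall>n m. n \<noteq> m \<longrightarrow> (AE \<omega> in M. \<eta> n \<omega> * \<eta> m \<omega> = 0))
     \<longrightarrow> (\<exists>\<alpha>::nat \<Rightarrow> real. (\<forall>n. \<alpha> n > 0) \<and>
            (\<exists>Z\<in>Lstar. (AE \<omega> in M. Z \<omega> \<ge> 0) \<and> (AE \<omega> in M. Z \<omega> = (\<Sum>n. \<alpha> n * \<eta> n \<omega>)))))"

lemma ex_density_proportional_on_sets:
  fixes Lstar :: "('a \<Rightarrow> real) set" and qs :: "nat \<Rightarrow> 'a \<Rightarrow> real" and B :: "nat \<Rightarrow> 'a set"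
  assumes Lstar: "Lstar \<subseteq> {Z. integrable M Z}" "\<And>Z c. Z \<in> Lstar \<Longrightarrow> (\<lambda>\<omega>. c * Z \<omega>) \<in> Lstar"
    and qs: "\<And>n. qs n \<in> Lstar \<inter> prob_densities M"
    and Z: "Z \<in> Lstar" "AE \<omega> in M. Z \<omega> \<ge> 0"
    and \<alpha>: "\<And>n. \<alpha> n > 0" and Z_on_B: "\<And>n. AE \<omega> in M. \<omega> \<in> B n \<longrightarrow> Z \<omega> = \<alpha> n * qs n \<omega>"
  shows "\<exists>q\<in>Lstar \<inter> prob_densities M. \<forall>n. \<exists>c\<ge>0. AE \<omega> in M. \<omega> \<in> B n \<longrightarrow> qs n \<omega> = c * q \<omega>"
proof (cases "(\<integral>\<omega>. Z \<omega> \<partial>M) > 0")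
  case True
  define z where "z = (\<integral>\<omega>. Z \<omega> \<partial>M)"
  define q where "q = (\<lambda>\<omega>. inverse z * Z \<omega>)"
  have "q \<in> Lstar \<inter> prob_densities M"
    using Lstar Z True by (auto simp: q_def z_def prob_densities_def elim!: AE_mp)
  moreover have "\<exists>c\<ge>0. AE \<omega> in M. \<omega> \<in> B n \<longrightarrow> qs n \<omega> = c * q \<omega>" for n
  proof (intro exI conjI)
    show "0 \<le> z / \<alpha> n" using True \<alpha>[of n] by (simp add: z_def)
    show "AE \<omega> in M. \<omega> \<in> B n \<longrightarrow> qs n \<omega> = (z / \<alpha> n) * q \<omega>"
      using Z_on_B[of n]
      by eventually_elim (use \<alpha>[of n] True in \<open>auto simp: q_def z_def field_simps\<close>)
  qed
  ultimately show ?thesis by blast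
next
  case False
  \<comment> \<open>then every \<open>qs n\<close> vanishes on \<open>B n\<close>, and any density will do\<close>
  have "integrable M Z" using Z(1) Lstar(1) by blast
  with False have "AE \<omega> in M. Z \<omega> = 0"
    using integral_nonneg_AE[OF Z(2)] integral_nonneg_eq_0_iff_AE[OF _ Z(2)] by simp
  then have "AE \<omega> in M. \<omega> \<in> B n \<longrightarrow> qs n \<omega> = 0 * qs 0 \<omega>" for n
    using Z_on_B[of n] by eventually_elim (use \<alpha>[of n] in auto)
  then show ?thesis using qs[of 0] by blast
qed

lemma density_pasting:
  fixes Lstar :: "('a \<Rightarrow> real) set" and qs :: "nat \<Rightarrow> 'a \<Rightarrow> real" and B :: "nat \<Rightarrow> 'a set"
  assumes Lstar: "Lstar \<subseteq> {Z. integrable M Z}" "\<And>Z c. Z \<in> Lstar \<Longrightarrow> (\<lambda>\<omega>. c * Z \<omega>) \<in> Lstar"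
      "indicator_closed M Lstar" "weighted_disjoint_sums_closed M Lstar"
    and qs: "\<And>n. qs n \<in> Lstar \<inter> prob_densities M"
    and B: "\<And>n. B n \<in> sets M" "disjoint_family B"
  shows "\<exists>q\<in>Lstar \<inter> prob_densities M. \<forall>n. \<exists>c\<ge>0. AE \<omega> in M. \<omega> \<in> B n \<longrightarrow> qs n \<omega> = c * q \<omega>"
proof -
  define \<eta> where "\<eta> n \<omega> = indicator (B n) \<omega> * qs n \<omega>" for n \<omega>
  have "\<eta> n \<in> Lstar" for n
    using qs[of n] B(1)[of n] Lstar(3) unfolding indicator_closed_def \<eta>_def by blast
  moreover have "AE \<omega> in M. \<eta> n \<omega> \<ge> 0" for n
    using qs[of n] by (auto simp: prob_densities_def \<eta>_def elim!: AE_mp)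
  moreover have "AE \<omega> in M. \<eta> n \<omega> * \<eta> m \<omega> = 0" if "n \<noteq> m" for n m
    using B(2) that by (auto simp: \<eta>_def disjoint_family_on_def split: split_indicator)
  ultimately obtain \<alpha> :: "nat \<Rightarrow> real" and Z where \<alpha>: "\<And>n. \<alpha> n > 0"
    and Z: "Z \<in> Lstar" "AE \<omega> in M. Z \<omega> \<ge> 0" and Z_sum: "AE \<omega> in M. Z \<omega> = (\<Sum>n. \<alpha> n * \<eta> n \<omega>)"
    using Lstar(4) unfolding weighted_disjoint_sums_closed_def by blast
  have "AE \<omega> in M. \<omega> \<in> B n \<longrightarrow> Z \<omega> = \<alpha> n * qs n \<omega>" for n
    using Z_sum by eventually_elim (simp add: \<eta>_def suminf_indicator_disjoint_family[OF B(2)])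
  with Lstar(1,2) qs Z \<alpha> show ?thesis by (rule ex_density_proportional_on_sets)
qed

locale conditional_dual_representation = prob_space M
  for M :: "'a measure" +
  fixes G :: "'a measure" and LF Lstar :: "('a \<Rightarrow> real) set"
    and \<pi>F :: "('a \<Rightarrow> real) \<Rightarrow> 'a \<Rightarrow> real" and X :: "'a \<Rightarrow> real"
  assumes subG: "subalgebra M G"
    and LF_measurable: "LF \<subseteq> borel_measurable M"
    and LF_add: "\<And>Y Z. Y \<in> LF \<Longrightarrow> Z \<in> LF \<Longrightarrow> (\<lambda>\<omega>. Y \<omega> + Z \<omega>) \<in> LF"
    and LF_indicator: "indicator_closed M LF"
    and pi_measurable: "\<And>Y. Y \<in> LF \<Longrightarrow> \<pi>F Y \<in> borel_measurable G"
    and REG: "\<forall>A\<in>sets G. \<forall>Y\<in>LF. \<forall>Z\<in>LF.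
        AE \<omega> in M. \<pi>F (\<lambda>\<omega>'. Y \<omega>' * indicator A \<omega>' + Z \<omega>' * indicator (space M - A) \<omega>') \<omega>
          = \<pi>F Y \<omega> * indicator A \<omega> + \<pi>F Z \<omega> * indicator (space M - A) \<omega>"
    and X: "X \<in> LF"
    and Lstar_integrable: "Lstar \<subseteq> {Z. integrable M Z}"
    and Lstar_scale: "\<And>Z c. Z \<in> Lstar \<Longrightarrow> (\<lambda>\<omega>. c * Z \<omega>) \<in> Lstar"
    and Lstar_indicator: "indicator_closed M Lstar"
    and Lstar_mult_integrable: "\<forall>Z\<in>Lstar. \<forall>Y\<in>LF. integrable M (\<lambda>\<omega>. Z \<omega> * Y \<omega>)"
    and disjoint_sums: "weighted_disjoint_sums_closed M Lstar"
begin

abbreviation densities :: "('a \<Rightarrow> real) set" where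
  "densities \<equiv> Lstar \<inter> prob_densities M"

abbreviation K :: "('a \<Rightarrow> real) \<Rightarrow> 'a \<Rightarrow> ereal" where
  "K \<equiv> Kfun M G LF \<pi>F X"

abbreviation H :: "'a \<Rightarrow> ereal" where
  "H \<equiv> Hfun M G LF Lstar \<pi>F X"

definition dominates :: "('a \<Rightarrow> real) \<Rightarrow> ('a \<Rightarrow> real) \<Rightarrow> bool" where
  "dominates q \<xi> \<longleftrightarrow> \<xi> \<in> LF \<and>
     (AE \<omega> in dens_measure M q.
        real_cond_exp (dens_measure M q) G \<xi> \<omega> \<ge> real_cond_exp (dens_measure M q) G X \<omega>)"

definition dominating_prices :: "('a \<Rightarrow> real) \<Rightarrow> ('a \<Rightarrow> ereal) set" where
  "dominating_prices q = {(\<lambda>\<omega>. ereal (\<pi>F \<xi> \<omega>)) | \<xi>. dominates q \<xi>}"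

lemma K_eq_ess_inf_dominating_prices: "K q = ess_inf_fam M (dominating_prices q)"
  unfolding Kfun_def dominating_prices_def dominates_def by simp

lemma sets_G_subset: "A \<in> sets G \<Longrightarrow> A \<in> sets M"
  using subG by (auto simp: subalgebra_def)

lemma space_G: "space G = space M"
  using subG by (simp add: subalgebra_def)

lemma dominates_iff:
  assumes q: "q \<in> densities"
  shows "dominates q \<xi> \<longleftrightarrow>
    \<xi> \<in> LF \<and> (\<forall>B\<in>sets G. 0 \<le> (\<integral>\<omega>. q \<omega> * (indicator B \<omega> * (\<xi> \<omega> - X \<omega>)) \<partial>M))"
proof (cases "\<xi> \<in> LF")
  case True
  have "q \<in> Lstar" "integrable M q" "AE \<omega> in M. 0 \<le> q \<omega>"
    using q by (auto simp: prob_densities_def)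
  with True show ?thesis
    unfolding dominates_def using X LF_measurable Lstar_mult_integrable
    by (subst real_cond_exp_dens_measure_ge_iff[OF subG]) auto
qed (simp add: dominates_def)

lemma dominates_X: "dominates q X"
  using X by (simp add: dominates_def)

lemma dominating_prices_measurable: "dominating_prices q \<subseteq> borel_measurable G"
  using pi_measurable by (auto simp: dominating_prices_def dominates_def)

lemma ex_G_measurable_ess_inf_dominating_prices:
  "\<exists>k\<in>borel_measurable G. is_ess_inf_fam M (dominating_prices q) k"
proof -
  have meas: "dominating_prices q \<subseteq> borel_measurable M"
    using dominating_prices_measurable measurable_from_subalg[OF subG] by blast
  have "dominating_prices q \<noteq> {}"
    using dominates_X by (auto simp: dominating_prices_def)
  from ess_inf_countable_lower_bound[OF meas this] obtain F :: "nat \<Rightarrow> 'a \<Rightarrow> ereal"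
    where F: "range F \<subseteq> dominating_prices q"
      and low: "\<forall>s\<in>dominating_prices q. AE \<omega> in M. (INF n. F n \<omega>) \<le> s \<omega>"
    by blast
  have "(\<lambda>\<omega>. INF n. F n \<omega>) \<in> borel_measurable G"
    using F dominating_prices_measurable[of q] by (intro borel_measurable_INF) auto
  moreover have "is_ess_inf_fam M (dominating_prices q) (\<lambda>\<omega>. INF n. F n \<omega>)"
    using meas F low by (rule is_ess_inf_fam_INF)
  ultimately show ?thesis by blast
qed

lemma K_is_ess_inf: "is_ess_inf_fam M (dominating_prices q) (K q)"
  using ex_G_measurable_ess_inf_dominating_prices[of q]
  unfolding K_eq_ess_inf_dominating_prices by (blast intro: is_ess_inf_fam_ess_inf_fam)

lemma K_G_version: "\<exists>k\<in>borel_measurable G. AE \<omega> in M. K q \<omega> = k \<omega>"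
  using ex_G_measurable_ess_inf_dominating_prices[of q]
  unfolding K_eq_ess_inf_dominating_prices by (blast intro: AE_ess_inf_fam_eq)

lemma K_measurable: "K q \<in> borel_measurable M"
  using K_is_ess_inf by (simp add: is_ess_inf_fam_def)

lemma AE_K_le_price: "dominates q \<xi> \<Longrightarrow> AE \<omega> in M. K q \<omega> \<le> ereal (\<pi>F \<xi> \<omega>)"
  using K_is_ess_inf[of q] by (auto simp: is_ess_inf_fam_def dominating_prices_def)

text \<open>Replacing \<open>\<xi>\<close> by \<open>X\<close> off \<open>A\<close> turns a \<open>q\<^sub>2\<close>-dominating claim into a \<open>q\<^sub>1\<close>-dominating one, because
  the test sets \<open>B\<close> then only see \<open>B \<inter> A\<close>, where \<open>q\<^sub>1 = c q\<^sub>2\<close>.\<close>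
lemma dominates_paste:
  assumes q: "q1 \<in> densities" "q2 \<in> densities" and A: "A \<in> sets G" and c: "c \<ge> 0"
    and proportional: "AE \<omega> in M. \<omega> \<in> A \<longrightarrow> q1 \<omega> = c * q2 \<omega>"
    and \<xi>: "dominates q2 \<xi>"
  shows "dominates q1 (\<lambda>\<omega>. \<xi> \<omega> * indicator A \<omega> + X \<omega> * indicator (space M - A) \<omega>)"
    (is "dominates q1 ?\<xi>")
proof -
  have \<xi>LF: "\<xi> \<in> LF" and pos: "\<forall>B\<in>sets G. 0 \<le> (\<integral>\<omega>. q2 \<omega> * (indicator B \<omega> * (\<xi> \<omega> - X \<omega>)) \<partial>M)"
    using \<xi> dominates_iff[OF q(2)] by auto
  have [measurable]: "A \<in> sets M" "\<xi> \<in> borel_measurable M" "X \<in> borel_measurable M"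
    "q1 \<in> borel_measurable M" "q2 \<in> borel_measurable M"
    using A sets_G_subset \<xi>LF X LF_measurable q by (auto simp: prob_densities_def)
  have "(\<lambda>\<omega>. indicator A \<omega> * \<xi> \<omega>) \<in> LF" "(\<lambda>\<omega>. indicator (space M - A) \<omega> * X \<omega>) \<in> LF"
    using LF_indicator \<xi>LF X unfolding indicator_closed_def by auto
  from LF_add[OF this] have "?\<xi> \<in> LF" by (simp add: mult.commute)
  moreover have "0 \<le> (\<integral>\<omega>. q1 \<omega> * (indicator B \<omega> * (?\<xi> \<omega> - X \<omega>)) \<partial>M)" if B: "B \<in> sets G" for B
  proof -
    have [measurable]: "B \<in> sets M" using B sets_G_subset by blast
    have "(\<integral>\<omega>. q1 \<omega> * (indicator B \<omega> * (?\<xi> \<omega> - X \<omega>)) \<partial>M)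
        = (\<integral>\<omega>. c * (q2 \<omega> * (indicator (B \<inter> A) \<omega> * (\<xi> \<omega> - X \<omega>))) \<partial>M)"
    proof (rule integral_cong_AE)
      show "AE \<omega> in M. q1 \<omega> * (indicator B \<omega> * (?\<xi> \<omega> - X \<omega>))
          = c * (q2 \<omega> * (indicator (B \<inter> A) \<omega> * (\<xi> \<omega> - X \<omega>)))"
        using proportional AE_space by eventually_elim (auto simp: indicator_def)
    qed measurable
    also have "\<dots> = c * (\<integral>\<omega>. q2 \<omega> * (indicator (B \<inter> A) \<omega> * (\<xi> \<omega> - X \<omega>)) \<partial>M)"
      by simp
    also have "\<dots> \<ge> 0" using pos B A c by simp
    finally show ?thesis .
  qed
  ultimately show ?thesis using dominates_iff[OF q(1)] by blast
qed

lemma AE_K_le_on_proportional: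
  assumes q: "q1 \<in> densities" "q2 \<in> densities" and A: "A \<in> sets G" and c: "c \<ge> 0"
    and proportional: "AE \<omega> in M. \<omega> \<in> A \<longrightarrow> q1 \<omega> = c * q2 \<omega>"
  shows "AE \<omega> in M. \<omega> \<in> A \<longrightarrow> K q1 \<omega> \<le> K q2 \<omega>"
proof -
  have [measurable]: "A \<in> sets M" "K q1 \<in> borel_measurable M"
    using A sets_G_subset K_measurable by auto
  define h where "h \<omega> = (if \<omega> \<in> A then K q1 \<omega> else -\<infinity>)" for \<omega>
  have "AE \<omega> in M. h \<omega> \<le> s \<omega>" if s_in: "s \<in> dominating_prices q2" for s
  proof -
    obtain \<xi> where \<xi>: "dominates q2 \<xi>" and s: "s = (\<lambda>\<omega>. ereal (\<pi>F \<xi> \<omega>))"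
      using s_in unfolding dominating_prices_def by blast
    let ?\<xi>' = "\<lambda>\<omega>. \<xi> \<omega> * indicator A \<omega> + X \<omega> * indicator (space M - A) \<omega>"
    have "AE \<omega> in M. K q1 \<omega> \<le> ereal (\<pi>F ?\<xi>' \<omega>)"
      using dominates_paste[OF q A c proportional \<xi>] by (rule AE_K_le_price)
    moreover have "AE \<omega> in M. \<pi>F ?\<xi>' \<omega> = \<pi>F \<xi> \<omega> * indicator A \<omega> + \<pi>F X \<omega> * indicator (space M - A) \<omega>"
      using REG A \<xi> X by (auto simp: dominates_def)
    ultimately show ?thesis
      by eventually_elim (auto simp: h_def s indicator_def)
  qed
  moreover have "h \<in> borel_measurable M" unfolding h_def by measurable
  ultimately have "AE \<omega> in M. h \<omega> \<le> K q2 \<omega>"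
    using K_is_ess_inf[of q2] unfolding is_ess_inf_fam_def by blast
  then show ?thesis by eventually_elim (auto simp: h_def)
qed

lemma densities_nonempty:
  assumes "AE \<omega> in M. H \<omega> > -\<infinity>"
  shows "densities \<noteq> {}"
proof
  assume "densities = {}"
  then have "is_ess_sup_fam M {K q | q. q \<in> densities} (\<lambda>_. -\<infinity>)"
    by (simp add: is_ess_sup_fam_def)
  then have "AE \<omega> in M. H \<omega> = -\<infinity>"
    unfolding Hfun_def by (rule AE_ess_sup_fam_eq)
  with assms have "AE \<omega> in M. False" by eventually_elim simp
  then show False by simp
qed

lemma H_countable_G_versions:
  assumes "densities \<noteq> {}"
  shows "\<exists>(qs :: nat \<Rightarrow> 'a \<Rightarrow> real) (g :: nat \<Rightarrow> 'a \<Rightarrow> ereal).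
    (\<forall>n. qs n \<in> densities) \<and> (\<forall>n. g n \<in> borel_measurable G) \<and>
    (\<forall>n. AE \<omega> in M. K (qs n) \<omega> = g n \<omega>) \<and> (AE \<omega> in M. H \<omega> = (SUP n. g n \<omega>))"
proof -
  define T where "T = {K q | q. q \<in> densities}"
  have T: "T \<subseteq> borel_measurable M" "T \<noteq> {}"
    using K_measurable assms by (auto simp: T_def)
  from ess_sup_countable_upper_bound[OF T] obtain F :: "nat \<Rightarrow> 'a \<Rightarrow> ereal"
    where F: "range F \<subseteq> T" and upper: "\<forall>s\<in>T. AE \<omega> in M. s \<omega> \<le> (SUP n. F n \<omega>)"
    by blast
  have H_F: "AE \<omega> in M. H \<omega> = (SUP n. F n \<omega>)"
    unfolding Hfun_def T_def[symmetric] using T(1) F upper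
    by (intro AE_ess_sup_fam_eq is_ess_sup_fam_SUP)
  have "\<forall>n. \<exists>q. q \<in> densities \<and> F n = K q" using F by (auto simp: T_def)
  from choice[OF this] obtain qs where qs: "\<And>n. qs n \<in> densities" "\<And>n. F n = K (qs n)"
    by blast
  have "\<forall>n. \<exists>k. k \<in> borel_measurable G \<and> (AE \<omega> in M. K (qs n) \<omega> = k \<omega>)"
    using K_G_version by blast
  from choice[OF this] obtain g
    where g: "\<And>n. g n \<in> borel_measurable G" "\<And>n. AE \<omega> in M. K (qs n) \<omega> = g n \<omega>"
    by blast
  have "AE \<omega> in M. \<forall>n. K (qs n) \<omega> = g n \<omega>" using g(2) by (simp add: AE_all_countable)
  with H_F have "AE \<omega> in M. H \<omega> = (SUP n. g n \<omega>)" by eventually_elim (simp add: qs(2))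
  with qs g show ?thesis by blast
qed

lemma ex_density_K_ge_on_partition:
  fixes qs :: "nat \<Rightarrow> 'a \<Rightarrow> real" and B :: "nat \<Rightarrow> 'a set"
  assumes qs: "\<And>n. qs n \<in> densities" and B: "\<And>n. B n \<in> sets G" "disjoint_family B"
  shows "\<exists>q\<in>densities. AE \<omega> in M. \<forall>n. \<omega> \<in> B n \<longrightarrow> K (qs n) \<omega> \<le> K q \<omega>"
proof -
  have "\<exists>q\<in>densities. \<forall>n. \<exists>c\<ge>0. AE \<omega> in M. \<omega> \<in> B n \<longrightarrow> qs n \<omega> = c * q \<omega>"
    using Lstar_integrable Lstar_scale Lstar_indicator disjoint_sums qs B sets_G_subset
    by (intro density_pasting[where M = M]) auto
  then obtain q where q: "q \<in> densities"
    and "\<forall>n. \<exists>c\<ge>0. AE \<omega> in M. \<omega> \<in> B n \<longrightarrow> qs n \<omega> = c * q \<omega>"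
    by blast
  then obtain c where c: "\<And>n. c n \<ge> 0" "\<And>n. AE \<omega> in M. \<omega> \<in> B n \<longrightarrow> qs n \<omega> = c n * q \<omega>"
    by metis
  have "AE \<omega> in M. \<omega> \<in> B n \<longrightarrow> K (qs n) \<omega> \<le> K q \<omega>" for n
    using qs q B(1) c by (rule AE_K_le_on_proportional)
  with q show ?thesis by (auto simp: AE_all_countable)
qed

lemma ex_density_H_minus_K_less:
  assumes H_finite: "AE \<omega> in M. H \<omega> > -\<infinity>" and \<epsilon>: "\<epsilon> > 0"
  shows "\<exists>q\<in>densities. AE \<omega> in M. H \<omega> - K q \<omega> < ereal \<epsilon>"
proof -
  obtain qs :: "nat \<Rightarrow> 'a \<Rightarrow> real" and g :: "nat \<Rightarrow> 'a \<Rightarrow> ereal"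
    where qs: "\<And>n. qs n \<in> densities" and g: "\<And>n. g n \<in> borel_measurable G"
    and K_g: "\<And>n. AE \<omega> in M. K (qs n) \<omega> = g n \<omega>" and H_g: "AE \<omega> in M. H \<omega> = (SUP n. g n \<omega>)"
    using H_countable_G_versions[OF densities_nonempty[OF H_finite]] by blast
  define A where "A n = {\<omega> \<in> space G. (SUP n. g n \<omega>) - ereal \<epsilon> < g n \<omega>}" for n
  have [measurable]: "g n \<in> borel_measurable G" for n by (rule g)
  have "A n \<in> sets G" for n unfolding A_def by measurable
  then have "range (disjointed A) \<subseteq> sets G" by (intro sets.range_disjointed_sets) blast
  have "\<exists>q\<in>densities. AE \<omega> in M. \<forall>n. \<omega> \<in> disjointed A n \<longrightarrow> K (qs n) \<omega> \<le> K q \<omega>"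
  proof (rule ex_density_K_ge_on_partition)
    show "qs n \<in> densities" for n by (rule qs)
    show "disjointed A n \<in> sets G" for n using \<open>range (disjointed A) \<subseteq> sets G\<close> by blast
  qed (rule disjoint_family_disjointed)
  then obtain q where q: "q \<in> densities"
    and K_q: "AE \<omega> in M. \<forall>n. \<omega> \<in> disjointed A n \<longrightarrow> K (qs n) \<omega> \<le> K q \<omega>"
    by blast
  have "AE \<omega> in M. \<forall>n. K (qs n) \<omega> = g n \<omega>" using K_g by (simp add: AE_all_countable)
  moreover have "AE \<omega> in M. \<forall>n. K (qs n) \<omega> \<le> ereal (\<pi>F X \<omega>)"
    using AE_K_le_price[OF dominates_X] by (simp add: AE_all_countable)
  ultimately have "AE \<omega> in M. H \<omega> - K q \<omega> < ereal \<epsilon>"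
    using H_finite H_g K_q AE_space
  proof eventually_elim
    case (elim \<omega>)
    let ?h = "SUP n. g n \<omega>"
    have "?h \<le> ereal (\<pi>F X \<omega>)" using elim(1,2) by (auto intro: SUP_least)
    moreover have "-\<infinity> < ?h" using elim(3,4) by simp
    ultimately obtain r where r: "?h = ereal r" by (cases ?h) auto
    with \<epsilon> have "?h - ereal \<epsilon> < ?h" by simp
    then obtain n where "?h - ereal \<epsilon> < g n \<omega>" by (auto simp: less_SUP_iff)
    then have "\<omega> \<in> (\<Union>n. A n)" using elim(6) by (auto simp: A_def space_G)
    then obtain m where m: "\<omega> \<in> disjointed A m" using UN_disjointed_eq[of A] by blast
    then have "?h - ereal \<epsilon> < g m \<omega>" using disjointed_subset[of A m] by (auto simp: A_def)
    also have "\<dots> \<le> K q \<omega>" using elim(1,5) m by simp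
    finally show "H \<omega> - K q \<omega> < ereal \<epsilon>" using r elim(4) by (cases "K q \<omega>") auto
  qed
  with q show ?thesis by blast
qed

end

theorem proposition22:
  fixes M G :: "'a measure"
    and LF LG Lstar :: "('a \<Rightarrow> real) set"
    and \<pi>F :: "('a \<Rightarrow> real) \<Rightarrow> ('a \<Rightarrow> real)"
    and X :: "'a \<Rightarrow> real"
  assumes P: "prob_space M"
    and subG: "subalgebra M G"
    and LF: "ae_saturated M M LF" "vector_lattice_fun LF" "indicator_closed M LF"
    and LG: "ae_saturated M G LG" "vector_lattice_fun LG" "indicator_closed G LG"
    and Lstar: "Lstar \<subseteq> {Z. integrable M Z}" "ae_saturated M M Lstar"
      "vector_lattice_fun Lstar" "indicator_closed M Lstar"
      "\<forall>Z\<in>Lstar. \<forall>Y\<in>LF. integrable M (\<lambda>\<omega>. Z \<omega> * Y \<omega>)"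
    and pi_maps: "\<forall>Y\<in>LF. \<pi>F Y \<in> LG"
    and pi_wd: "\<forall>Y\<in>LF. \<forall>Z\<in>LF. (AE \<omega> in M. Y \<omega> = Z \<omega>) \<longrightarrow> (AE \<omega> in M. \<pi>F Y \<omega> = \<pi>F Z \<omega>)"
    and REG: "\<forall>A\<in>sets G. \<forall>Y\<in>LF. \<forall>Z\<in>LF.
        AE \<omega> in M. \<pi>F (\<lambda>\<omega>'. Y \<omega>' * indicator A \<omega>' + Z \<omega>' * indicator (space M - A) \<omega>') \<omega>
          = \<pi>F Y \<omega> * indicator A \<omega> + \<pi>F Z \<omega> * indicator (space M - A) \<omega>"
    and banach: "\<exists>N. banach_lattice_in_L1 M Lstar N"
    and disj: "\<forall>\<eta>::nat \<Rightarrow> 'a \<Rightarrow> real.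
        (\<forall>n. \<eta> n \<in> Lstar \<and> (AE \<omega> in M. \<eta> n \<omega> \<ge> 0)) \<and>
        (\<forall>n m. n \<noteq> m \<longrightarrow> (AE \<omega> in M. \<eta> n \<omega> * \<eta> m \<omega> = 0))
        \<longrightarrow> (\<exists>\<alpha>::nat \<Rightarrow> real. (\<forall>n. \<alpha> n > 0) \<and>
               (\<exists>Z\<in>Lstar. (AE \<omega> in M. Z \<omega> \<ge> 0) \<and> (AE \<omega> in M. Z \<omega> = (\<Sum>n. \<alpha> n * \<eta> n \<omega>))))"
    and X: "X \<in> LF"
    and Hfin: "AE \<omega> in M. Hfun M G LF Lstar \<pi>F X \<omega> > -\<infinity>"
  shows "\<forall>\<epsilon>>0. \<exists>q \<in> Lstar \<inter> prob_densities M.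
           AE \<omega> in M. Hfun M G LF Lstar \<pi>F X \<omega> - Kfun M G LF \<pi>F X q \<omega> < ereal \<epsilon>"
proof -
  have "conditional_dual_representation M G LF Lstar \<pi>F X"
  proof (intro conditional_dual_representation.intro conditional_dual_representation_axioms.intro P)
    show "LF \<subseteq> borel_measurable M" using LF(1) by (simp add: ae_saturated_def)
    show "(\<lambda>\<omega>. Y \<omega> + Z \<omega>) \<in> LF" if "Y \<in> LF" "Z \<in> LF" for Y Z
      using LF(2) that by (simp add: vector_lattice_fun_def)
    show "\<pi>F Y \<in> borel_measurable G" if "Y \<in> LF" for Y
      using pi_maps LG(1) that by (auto simp: ae_saturated_def)
    show "(\<lambda>\<omega>. c * Z \<omega>) \<in> Lstar" if "Z \<in> Lstar" for Z c
      using Lstar(3) that by (simp add: vector_lattice_fun_def)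
    show "weighted_disjoint_sums_closed M Lstar"
      using disj unfolding weighted_disjoint_sums_closed_def .
  qed (fact subG LF(3) REG X Lstar(1) Lstar(4) Lstar(5))+
  then interpret conditional_dual_representation M G LF Lstar \<pi>F X .
  show ?thesis using ex_density_H_minus_K_less[OF Hfin] by blast
qed

end
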